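(* Let $K_1,K_2$ be two $q$-edge-colored ordered complete graphs, and let $S\subseteq[q]$ be an arbitrary set of colors. Let $L_1,L_2$ be the lengths of the longest monotone $S$-colored paths in $K_1,K_2$ respectively. Then the length of the longest $S$-colored monotone path in $K_1\otimes K_2$ is exactly $L_1L_2$.
   Context: An ordered complete graph is a complete graph with a linear order on its vertices; colors are from $[q]$. A path $v_1,\dots,v_L$ is monotone if $v_1<\dots<v_L$; its length is its number of vertices; it is $S$-colored if every edge of it has a color in $S$. The lexicographic product $K_1\otimes K_2$ is the $q$-edge-colored ordered complete graph on vertex set $V(K_2)\times V(K_1)$, ordered lexicographically with the $K_2$-coordinate compared first, where the edge between $(u,x)$ and $(w,y)$ receives the color of $uw$ in $K_2$ if $u\neq w$, and the color of $xy$ in $K_1$ if $u=w$. *)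

theory Defs
  imports Main "HOL-Library.Product_Lexorder"
begin

definition colored_ocg :: "'a::linorder set \<Rightarrow> ('a \<Rightarrow> 'a \<Rightarrow> nat) \<Rightarrow> nat \<Rightarrow> bool" where
  "colored_ocg V c q \<longleftrightarrow> finite V \<and>
     (\<forall>x\<in>V. \<forall>y\<in>V. x \<noteq> y \<longrightarrow> c x y = c y x \<and> c x y \<in> {1..q})"

text \<open>Monotone path v_1 < ... < v_L in V (list of its vertices; length = number of vertices).\<close>
definition mono_path :: "'a::linorder set \<Rightarrow> 'a list \<Rightarrow> bool" where
  "mono_path V vs \<longleftrightarrow> sorted_wrt (<) vs \<and> set vs \<subseteq> V"

definition S_colored :: "('a \<Rightarrow> 'a \<Rightarrow> nat) \<Rightarrow> nat set \<Rightarrow> 'a list \<Rightarrow> bool" where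
  "S_colored c S vs \<longleftrightarrow> (\<forall>i. Suc i < length vs \<longrightarrow> c (vs ! i) (vs ! Suc i) \<in> S)"

definition longest_mono_path :: "'a::linorder set \<Rightarrow> ('a \<Rightarrow> 'a \<Rightarrow> nat) \<Rightarrow> nat set \<Rightarrow> nat" where
  "longest_mono_path V c S = Max {length vs | vs. mono_path V vs \<and> S_colored c S vs}"

text \<open>Lexicographic product K1 \<otimes> K2 on V2 \<times> V1 (pairs ordered lexicographically,
  K2-coordinate first, via Product_Lexorder).\<close>
definition lex_prod_color :: "('a \<Rightarrow> 'a \<Rightarrow> nat) \<Rightarrow> ('b \<Rightarrow> 'b \<Rightarrow> nat) \<Rightarrow> ('b \<times> 'a) \<Rightarrow> ('b \<times> 'a) \<Rightarrow> nat" where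
  "lex_prod_color c1 c2 p p' = (if fst p \<noteq> fst p' then c2 (fst p) (fst p') else c1 (snd p) (snd p'))"

end

theory Submission
  imports Defs
begin

text \<open>Concatenating, for each vertex of a longest path of K2 in order, a copy of a longest path
  of K1 gives an S-coloured monotone path of length L1 L2 in the product. Conversely, a monotone
  path of the product splits into maximal blocks with constant K2-coordinate; every block is,
  up to projection, a monotone S-coloured path of K1, so has at most L1 vertices, and the
  K2-coordinates of the consecutive blocks form a monotone S-coloured path of K2, so there are
  at most L2 blocks.\<close>

lemma S_colored_iff_successively:
  "S_colored c S vs \<longleftrightarrow> successively (\<lambda>x y. c x y \<in> S) vs"
  unfolding S_colored_def successively_conv_nth by simp

lemma length_le_card_if_mono_path:
  assumes "finite V" "mono_path V vs"
  shows "length vs \<le> card V"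
proof -
  have "length vs = card (set vs)"
    using assms(2) by (simp add: mono_path_def strict_sorted_iff distinct_card)
  also have "\<dots> \<le> card V"
    using assms by (simp add: mono_path_def card_mono)
  finally show ?thesis .
qed

lemma finite_mono_path_lengths:
  assumes "finite V"
  shows "finite {length vs | vs. mono_path V vs \<and> S_colored c S vs}"
  by (rule finite_subset[of _ "{..card V}"]) (auto dest: length_le_card_if_mono_path[OF assms])

lemma length_le_longest_mono_path:
  assumes "finite V" "mono_path V vs" "S_colored c S vs"
  shows "length vs \<le> longest_mono_path V c S"
  unfolding longest_mono_path_def
  using finite_mono_path_lengths[OF assms(1)] assms(2,3) by (intro Max_ge) auto

lemma longest_mono_path_attained:
  assumes "finite V"
  obtains vs where "mono_path V vs" "S_colored c S vs" "length vs = longest_mono_path V c S"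
proof -
  have "[] \<in> {vs. mono_path V vs \<and> S_colored c S vs}"
    by (simp add: mono_path_def S_colored_def)
  then have "{length vs | vs. mono_path V vs \<and> S_colored c S vs} \<noteq> {}"
    by blast
  from Max_in[OF finite_mono_path_lengths[OF assms] this] show ?thesis
    using that unfolding longest_mono_path_def by auto
qed

lemma sorted_wrt_less_product:
  fixes ys :: "'b::linorder list" and xs :: "'a::linorder list"
  assumes "sorted_wrt (<) ys" "sorted_wrt (<) xs"
  shows "sorted_wrt (<) (List.product ys xs)"
  using assms(1) by (induction ys) (auto simp: sorted_wrt_append sorted_wrt_map assms(2))

lemma S_colored_product:
  assumes "distinct ys" "S_colored c2 S ys" "S_colored c1 S xs" "xs \<noteq> []"
  shows "S_colored (lex_prod_color c1 c2) S (List.product ys xs)"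
  using assms(1,2) unfolding S_colored_iff_successively
proof (induction ys)
  case Nil
  then show ?case by simp
next
  case (Cons y ys)
  have block: "successively (\<lambda>x y. lex_prod_color c1 c2 x y \<in> S) (map (Pair y) xs)"
    using assms(3) by (simp add: S_colored_iff_successively successively_map lex_prod_color_def)
  show ?case
  proof (cases ys)
    case Nil
    then show ?thesis using block by simp
  next
    case (Cons z zs)
    then have "y \<noteq> z" "c2 y z \<in> S"
      using Cons.prems by auto
    moreover have "successively (\<lambda>x y. lex_prod_color c1 c2 x y \<in> S) (List.product ys xs)"
      using Cons.prems by (intro Cons.IH) (auto simp: successively_Cons)
    ultimately show ?thesis
      using block assms(4) Cons
      by (simp add: successively_append_iff last_map hd_map lex_prod_color_def)
  qed
qed

lemma longest_mono_path_lex_prod_ge: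
  assumes "finite V1" "finite V2"
  shows "longest_mono_path V1 c1 S * longest_mono_path V2 c2 S
           \<le> longest_mono_path (V2 \<times> V1) (lex_prod_color c1 c2) S"
proof -
  obtain xs where xs: "mono_path V1 xs" "S_colored c1 S xs" "length xs = longest_mono_path V1 c1 S"
    using longest_mono_path_attained[OF assms(1)] .
  obtain ys where ys: "mono_path V2 ys" "S_colored c2 S ys" "length ys = longest_mono_path V2 c2 S"
    using longest_mono_path_attained[OF assms(2)] .
  show ?thesis
  proof (cases "xs = []")
    case True
    then show ?thesis using xs(3) by simp
  next
    case False
    have "distinct ys"
      using ys(1) by (simp add: mono_path_def strict_sorted_iff)
    then have "S_colored (lex_prod_color c1 c2) S (List.product ys xs)"
      using S_colored_product ys(2) xs(2) False by blast
    moreover have "mono_path (V2 \<times> V1) (List.product ys xs)"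
      using xs(1) ys(1) by (auto simp: mono_path_def sorted_wrt_less_product)
    ultimately have "length (List.product ys xs) \<le> longest_mono_path (V2 \<times> V1) (lex_prod_color c1 c2) S"
      using length_le_longest_mono_path[of "V2 \<times> V1"] assms by blast
    then show ?thesis using xs(3) ys(3) by (simp add: mult.commute)
  qed
qed

lemma length_fiber_le_longest_mono_path:
  assumes "finite V1" "mono_path (V2 \<times> V1) B" "S_colored (lex_prod_color c1 c2) S B"
    and "\<forall>p\<in>set B. fst p = u"
  shows "length B \<le> longest_mono_path V1 c1 S"
proof -
  have "sorted_wrt (\<lambda>x y. snd x < snd y) B"
    by (rule sorted_wrt_mono_rel[of B "(<)"])
      (use assms(2,4) in \<open>auto simp: mono_path_def less_prod_def'\<close>)
  then have "mono_path V1 (map snd B)"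
    using assms(2) by (auto simp: mono_path_def sorted_wrt_map)
  moreover have "S_colored c1 S (map snd B)"
    using assms(3,4) unfolding S_colored_iff_successively successively_map
    by (auto intro: successively_mono simp: lex_prod_color_def)
  ultimately show ?thesis
    using length_le_longest_mono_path[OF assms(1)] by fastforce
qed

lemma lex_prod_path_projection:
  assumes "finite V1" "mono_path (V2 \<times> V1) ps" "S_colored (lex_prod_color c1 c2) S ps" "ps \<noteq> []"
  shows "\<exists>us. mono_path V2 us \<and> S_colored c2 S us \<and> us \<noteq> [] \<and> hd us = fst (hd ps) \<and>
           length ps \<le> length us * longest_mono_path V1 c1 S"
  using assms(2-4)
proof (induction "length ps" arbitrary: ps rule: less_induct)
  case less
  define u where "u = fst (hd ps)"
  define B where "B = takeWhile (\<lambda>p. fst p = u) ps"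
  define A where "A = dropWhile (\<lambda>p. fst p = u) ps"
  have ps: "ps = B @ A"
    unfolding A_def B_def by simp
  have "B \<noteq> []"
    using less.prems(3) unfolding B_def u_def by (cases ps) auto
  have B_fst: "\<forall>p\<in>set B. fst p = u"
    unfolding B_def by (auto dest: set_takeWhileD)
  have u: "u \<in> V2"
    using less.prems unfolding u_def mono_path_def by (cases ps) auto
  have "mono_path (V2 \<times> V1) B" "mono_path (V2 \<times> V1) A" and B_less_A: "\<forall>x\<in>set B. \<forall>y\<in>set A. x < y"
    using less.prems(1) unfolding ps mono_path_def sorted_wrt_append by auto
  moreover have "S_colored (lex_prod_color c1 c2) S B" "S_colored (lex_prod_color c1 c2) S A"
    and B_A_color: "A \<noteq> [] \<Longrightarrow> lex_prod_color c1 c2 (last B) (hd A) \<in> S"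
    using less.prems(2) \<open>B \<noteq> []\<close> unfolding ps S_colored_iff_successively
    by (auto simp: successively_append_iff)
  ultimately have B_len: "length B \<le> longest_mono_path V1 c1 S"
    using length_fiber_le_longest_mono_path[OF assms(1)] B_fst by blast
  show ?case
  proof (cases "A = []")
    case True
    then show ?thesis
      using B_len u ps by (intro exI[of _ "[u]"]) (simp add: mono_path_def S_colored_def u_def)
  next
    case False
    define w where "w = fst (hd A)"
    have "length A < length ps"
      using ps \<open>B \<noteq> []\<close> by simp
    then obtain us where us: "mono_path V2 us" "S_colored c2 S us" "us \<noteq> []" "hd us = w"
        "length A \<le> length us * longest_mono_path V1 c1 S"
      using less.hyps \<open>mono_path (V2 \<times> V1) A\<close> \<open>S_colored (lex_prod_color c1 c2) S A\<close> False
      unfolding w_def by blast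
    have "w \<noteq> u"
      using hd_dropWhile[of "\<lambda>p. fst p = u" ps] False unfolding A_def w_def by simp
    moreover have "fst (last B) = u"
      using B_fst \<open>B \<noteq> []\<close> by simp
    moreover have "last B < hd A"
      using B_less_A \<open>B \<noteq> []\<close> False by simp
    ultimately have "u < w" "c2 u w \<in> S"
      using B_A_color[OF False] unfolding w_def lex_prod_color_def by (auto simp: less_prod_def')
    then have "mono_path V2 (u # us) \<and> S_colored c2 S (u # us)"
      using us(1-4) u unfolding mono_path_def S_colored_iff_successively
      by (cases us) auto
    moreover have "length ps \<le> length (u # us) * longest_mono_path V1 c1 S"
      using ps B_len us(5) by simp
    ultimately show ?thesis
      using u_def by (intro exI[of _ "u # us"]) simp
  qed
qed

lemma longest_mono_path_lex_prod_le:
  assumes "finite V1" "finite V2"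
  shows "longest_mono_path (V2 \<times> V1) (lex_prod_color c1 c2) S
           \<le> longest_mono_path V1 c1 S * longest_mono_path V2 c2 S"
proof -
  have "finite (V2 \<times> V1)"
    using assms by simp
  then obtain ps where ps: "mono_path (V2 \<times> V1) ps" "S_colored (lex_prod_color c1 c2) S ps"
      "length ps = longest_mono_path (V2 \<times> V1) (lex_prod_color c1 c2) S"
    by (rule longest_mono_path_attained)
  show ?thesis
  proof (cases "ps = []")
    case True
    then show ?thesis using ps(3) by simp
  next
    case False
    then obtain us where "mono_path V2 us" "S_colored c2 S us"
        and ps_len: "length ps \<le> length us * longest_mono_path V1 c1 S"
      using lex_prod_path_projection[OF assms(1) ps(1,2)] by blast
    have "longest_mono_path (V2 \<times> V1) (lex_prod_color c1 c2) S
            \<le> length us * longest_mono_path V1 c1 S"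
      using ps(3) ps_len by simp
    also have "\<dots> \<le> longest_mono_path V2 c2 S * longest_mono_path V1 c1 S"
      using length_le_longest_mono_path[OF assms(2)] \<open>mono_path V2 us\<close> \<open>S_colored c2 S us\<close>
      by (intro mult_le_mono1)
    finally show ?thesis
      by (simp add: mult.commute)
  qed
qed

theorem proposition3p3:
  fixes V1 :: "'a::linorder set" and V2 :: "'b::linorder set"
    and c1 :: "'a \<Rightarrow> 'a \<Rightarrow> nat" and c2 :: "'b \<Rightarrow> 'b \<Rightarrow> nat"
    and q :: nat and S :: "nat set"
  assumes "colored_ocg V1 c1 q" and "colored_ocg V2 c2 q"
    and "S \<subseteq> {1..q}"
  shows "longest_mono_path (V2 \<times> V1) (lex_prod_color c1 c2) S
           = longest_mono_path V1 c1 S * longest_mono_path V2 c2 S"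
proof -
  have "finite V1" "finite V2"
    using assms(1,2) unfolding colored_ocg_def by auto
  then show ?thesis
    using longest_mono_path_lex_prod_le longest_mono_path_lex_prod_ge by (metis le_antisym)
qed

end
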